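(* Let $x>0$, $y\ge 0$, $z>0$ (the approximation is intended for the regime $y,z\ll x$). Let $a=(y+z)/2$ and $g=\sqrt{yz}$. Then $$R_D(x,y,z)=\frac{3}{\sqrt x}\left(\frac{1}{g+z}-\frac{r}{4x}\right),$$ where $$\frac{1}{1-g/x}\ln\frac{2x}{a+g}-\frac{2z}{g+z}<r<\frac{1}{1-a/2x}\ln\frac{8x}{a+g}.$$
   Context: For $x,y\ge0$ not both zero and $z>0$: $R_D(x,y,z)=\frac32\int_0^\infty[(t+x)(t+y)]^{-1/2}(t+z)^{-3/2}\,dt$.
   Formalization: The regime $y,z\ll x$ is given by the two extra hypotheses g < x and a < 2x alongside x > 0, y >= 0, z > 0. The paper assumes this as well. *)

theory Defs
  imports "HOL-Analysis.Analysis"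
begin

definition carlson_RD :: "real \<Rightarrow> real \<Rightarrow> real \<Rightarrow> real" where
  "carlson_RD x y z =
     3 / 2 * integral {0..} (\<lambda>t. 1 / (sqrt ((t + x) * (t + y)) * (t + z) powr (3/2)))"

end

(*
  With g = sqrt (y z) and a = (y + z)/2: the integral of (t+y)^(-1/2) (t+z)^(-3/2) over (0, oo)
  is 2/(g + z), and 1/sqrt x - 1/sqrt (t+x) = t / (sqrt x sqrt (t+x) (sqrt (t+x) + sqrt x)).
  Hence the r of the theorem is the integral over (0, oo) of the positive density
  RD_remainder_density.  Both bounds compare this density pointwise with kernels
    N / (sqrt (t+y) sqrt (t+z) ((sqrt (t+y) + sqrt (t+z))^2 + N)),
  whose integral ln (1 + N/(sqrt y + sqrt z)^2) is elementary: N = 8x - 4a from above, and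
  N = 4x - 2(a + g) from below, where the lower comparison needs the correction
  - z (t+y)^(-1/2) (t+z)^(-3/2) + z t/(t + 2x + y + z)^3.
  When a + g >= 2x the lower bound is negative and r >= 0 suffices.
*)

theory Submission
  imports Defs "HOL-Real_Asymp.Real_Asymp"
begin

lemma has_integral_Ioi_antiderivative:
  fixes F f :: "real \<Rightarrow> real"
  assumes cont: "continuous_on {a..} F"
    and deriv: "\<And>t. t > a \<Longrightarrow> (F has_real_derivative f t) (at t)"
    and nonneg: "\<And>t. t > a \<Longrightarrow> f t \<ge> 0"
    and lim: "(F \<longlongrightarrow> L) at_top"
  shows "(f has_integral (L - F a)) {a<..}"
proof -
  define h where "h t = (if t > a then f t else 0)" for t
  have h_int: "(h has_integral (F b - F a)) {a..b}" if "a \<le> b" for b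
  proof (rule fundamental_theorem_of_calculus_interior[OF that])
    show "continuous_on {a..b} F" using cont by (rule continuous_on_subset) auto
    fix t assume "t \<in> {a<..<b}"
    then show "(F has_vector_derivative h t) (at t)"
      using deriv[of t] by (simp add: h_def has_real_derivative_iff_has_vector_derivative)
  qed
  have "(h has_integral (L - F a)) {a..}"
  proof (rule has_integral_to_inf)
    show "h integrable_on {a..b}" for b
      using h_int[of b] integrable_on_def[of h] by (cases "a \<le> b") auto
    have "\<forall>\<^sub>F b in at_top. F b - F a = integral {a..b} h"
      by (rule eventually_at_top_linorderI[of a]) (use h_int in \<open>auto intro: sym[OF integral_unique]\<close>)
    moreover have "((\<lambda>b. F b - F a) \<longlongrightarrow> L - F a) at_top"
      by (intro tendsto_intros lim)
    ultimately show "((\<lambda>b. integral {a..b} h) \<longlongrightarrow> L - F a) at_top"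
      by (rule Lim_transform_eventually[rotated])
    show "h t \<ge> 0" for t using nonneg by (simp add: h_def)
  qed
  then have "(h has_integral (L - F a)) {a<..}"
    by (rule has_integral_spike_set_eq[THEN iffD1, rotated 2]) (auto intro: negligible_subset[of "{a}"])
  then show ?thesis by (rule has_integral_eq[rotated]) (simp add: h_def)
qed

lemma has_integral_Ioi_sqrt_shift_cube:
  fixes y z :: real
  assumes y: "y \<ge> 0" and z: "z > 0"
  shows "((\<lambda>t. 1 / (sqrt (t + y) * sqrt (t + z) ^ 3)) has_integral 2 / (sqrt z * (sqrt y + sqrt z))) {0<..}"
proof -
  define F where "F t = - 2 / (sqrt (t + z) * (sqrt (t + y) + sqrt (t + z)))" for t :: real
  have "((\<lambda>t. 1 / (sqrt (t + y) * sqrt (t + z) ^ 3)) has_integral (0 - F 0)) {0<..}"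
  proof (rule has_integral_Ioi_antiderivative)
    have "sqrt (t + y) + sqrt (t + z) > 0" if "t \<ge> 0" for t
      using that y z by (intro add_nonneg_pos) auto
    then show "continuous_on {0..} F"
      unfolding F_def using z by (force intro!: continuous_intros)
    show "(F has_real_derivative 1 / (sqrt (t + y) * sqrt (t + z) ^ 3)) (at t)" if "t > 0" for t
    proof -
      define q s where "q = sqrt (t + y)" and "s = sqrt (t + z)"
      have "q > 0" "s > 0" "q ^ 2 = t + y" "s ^ 2 = t + z"
        using that y z by (auto simp: q_def s_def)
      then show ?thesis
        unfolding F_def using that y z
        apply (auto intro!: derivative_eq_intros simp flip: q_def s_def)
        apply (auto simp: divide_simps add_pos_pos)
        apply (simp add: algebra_simps power3_eq_cube)
        done
    qed
    show "1 / (sqrt (t + y) * sqrt (t + z) ^ 3) \<ge> 0" if "t > 0" for t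
      using that y z by simp
    show "(F \<longlongrightarrow> 0) at_top"
      unfolding F_def using z by real_asymp
  qed
  moreover have "0 - F 0 = 2 / (sqrt z * (sqrt y + sqrt z))"
    by (simp add: F_def)
  ultimately show ?thesis by simp
qed

lemma log_kernel_primitive_has_real_derivative:
  fixes y z N t :: real
  assumes y: "y \<ge> 0" and z: "z > 0" and N: "N > 0" and t: "t > 0"
  shows "((\<lambda>t. 2 * ln (sqrt (t + y) + sqrt (t + z)) - ln ((sqrt (t + y) + sqrt (t + z)) ^ 2 + N))
           has_real_derivative N / (sqrt (t + y) * sqrt (t + z) * ((sqrt (t + y) + sqrt (t + z)) ^ 2 + N)))
           (at t)"
proof -
  define q s where "q = sqrt (t + y)" and "s = sqrt (t + z)"
  have qs: "q > 0" "s > 0" "q ^ 2 = t + y" "s ^ 2 = t + z"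
    using t y z by (auto simp: q_def s_def)
  have denom: "(q + s) ^ 2 + N \<noteq> 0"
    using add_nonneg_pos[OF zero_le_power2[of "q + s"] N] by simp
  show ?thesis
    using qs denom t y z N
    apply (auto intro!: derivative_eq_intros simp flip: q_def s_def)
    apply (auto simp: divide_simps add_pos_pos)
    apply (simp add: algebra_simps power2_eq_square)
    done
qed

lemma has_integral_Ioi_log_kernel:
  fixes y z N :: real
  assumes y: "y \<ge> 0" and z: "z > 0" and N: "N > 0"
  shows "((\<lambda>t. N / (sqrt (t + y) * sqrt (t + z) * ((sqrt (t + y) + sqrt (t + z)) ^ 2 + N)))
           has_integral ln (1 + N / (sqrt y + sqrt z) ^ 2)) {0<..}"
proof -
  define F where "F t = 2 * ln (sqrt (t + y) + sqrt (t + z)) - ln ((sqrt (t + y) + sqrt (t + z)) ^ 2 + N)"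
    for t :: real
  have pos: "sqrt (t + y) + sqrt (t + z) > 0" if "t \<ge> 0" for t
    using that y z by (intro add_nonneg_pos) auto
  have "((\<lambda>t. N / (sqrt (t + y) * sqrt (t + z) * ((sqrt (t + y) + sqrt (t + z)) ^ 2 + N)))
          has_integral (0 - F 0)) {0<..}"
  proof (rule has_integral_Ioi_antiderivative)
    have "sqrt (t + y) + sqrt (t + z) \<noteq> 0" "(sqrt (t + y) + sqrt (t + z)) ^ 2 + N \<noteq> 0"
      if "t \<ge> 0" for t
      using pos[OF that] N zero_le_power2[of "sqrt (t + y) + sqrt (t + z)"] by linarith+
    then show "continuous_on {0..} F"
      unfolding F_def by (auto intro!: continuous_intros)
    show "(F has_real_derivative
            N / (sqrt (t + y) * sqrt (t + z) * ((sqrt (t + y) + sqrt (t + z)) ^ 2 + N))) (at t)"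
      if "t > 0" for t
      unfolding F_def by (rule log_kernel_primitive_has_real_derivative[OF y z N that])
    show "N / (sqrt (t + y) * sqrt (t + z) * ((sqrt (t + y) + sqrt (t + z)) ^ 2 + N)) \<ge> 0"
      if "t > 0" for t
      using that y z N by (simp add: add_nonneg_pos)
    have "(F \<longlongrightarrow> 2 * ln 2 - ln 4) at_top"
      unfolding F_def by real_asymp
    moreover have "ln (4 :: real) = 2 * ln 2"
      using ln_realpow[of 2 2] by simp
    ultimately show "(F \<longlongrightarrow> 0) at_top" by simp
  qed
  moreover have "0 - F 0 = ln (1 + N / (sqrt y + sqrt z) ^ 2)"
  proof -
    define u where "u = sqrt y + sqrt z"
    have u: "u > 0" using pos[of 0] by (simp add: u_def)
    have "0 - F 0 = ln (u ^ 2 + N) - ln (u ^ 2)"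
      using u by (simp add: F_def u_def ln_realpow)
    also have "\<dots> = ln ((u ^ 2 + N) / u ^ 2)"
      using u add_pos_pos[OF zero_less_power[OF u, of 2] N] by (simp add: ln_div)
    also have "(u ^ 2 + N) / u ^ 2 = 1 + N / u ^ 2"
      using u by (simp add: field_simps)
    finally show ?thesis by (simp add: u_def)
  qed
  ultimately show ?thesis by simp
qed

lemma has_integral_Ioi_div_shift_cube:
  fixes M :: real
  assumes M: "M > 0"
  shows "((\<lambda>t. t / (t + M) ^ 3) has_integral 1 / (2 * M)) {0<..}"
proof -
  define F where "F t = - (2 * t + M) / (2 * (t + M) ^ 2)" for t :: real
  have "((\<lambda>t. t / (t + M) ^ 3) has_integral (0 - F 0)) {0<..}"
  proof (rule has_integral_Ioi_antiderivative)
    show "continuous_on {0..} F"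
      unfolding F_def using M by (auto intro!: continuous_intros)
    show "(F has_real_derivative t / (t + M) ^ 3) (at t)" if "t > 0" for t
      unfolding F_def using that M
      by (auto intro!: derivative_eq_intros simp: divide_simps) (simp add: algebra_simps eval_nat_numeral)
    show "t / (t + M) ^ 3 \<ge> 0" if "t > 0" for t
      using that M by simp
    show "(F \<longlongrightarrow> 0) at_top"
      unfolding F_def by real_asymp
  qed
  then show ?thesis using M by (simp add: F_def power2_eq_square)
qed

lemma sqrt_shift_mult_ge:
  fixes t y z :: real
  assumes "t \<ge> 0" "y \<ge> 0" "z \<ge> 0"
  shows "t + sqrt (y * z) \<le> sqrt (t + y) * sqrt (t + z)"
proof -
  have "(t + sqrt (y * z)) ^ 2 = t ^ 2 + 2 * t * sqrt (y * z) + y * z"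
    using assms by (simp add: power2_eq_square algebra_simps)
  also have "\<dots> \<le> t ^ 2 + t * (y + z) + y * z"
    using mult_left_mono[OF arith_geo_mean_sqrt[of y z] \<open>t \<ge> 0\<close>] assms by simp
  also have "\<dots> = (t + y) * (t + z)"
    by (simp add: power2_eq_square algebra_simps)
  finally show ?thesis
    using assms by (simp add: real_le_rsqrt real_sqrt_mult[symmetric])
qed

lemma sqrt_shift_mult_le:
  fixes t y z :: real
  assumes "t + y \<ge> 0" "t + z \<ge> 0"
  shows "sqrt (t + y) * sqrt (t + z) \<le> t + (y + z) / 2"
  using arith_geo_mean_sqrt[OF assms] unfolding real_sqrt_mult by argo

lemma sqrt_shift_mult_sum_ge:
  fixes t x :: real
  assumes "t \<ge> 0" "x \<ge> 0"
  shows "t + 2 * x \<le> sqrt (t + x) * (sqrt (t + x) + sqrt x)"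
proof -
  have "sqrt x * sqrt x \<le> sqrt (t + x) * sqrt x"
    using assms by (intro mult_right_mono) auto
  then show ?thesis
    using assms by (simp add: distrib_left)
qed

lemma sqrt_shift_mult_cube_le:
  fixes t y z :: real
  assumes t: "t \<ge> 0" and y: "y \<ge> 0" and z: "z \<ge> 0"
  shows "sqrt (t + y) * sqrt (t + z) ^ 3 \<le> (t + y + z) ^ 2"
proof -
  have "sqrt (t + y) * sqrt (t + z) \<le> t + (y + z) / 2"
    using t y z by (intro sqrt_shift_mult_le) auto
  then have "sqrt (t + y) * sqrt (t + z) \<le> t + y + z"
    using y z by argo
  moreover have "sqrt (t + z) ^ 2 \<le> t + y + z"
    using t y z by simp
  ultimately have "(sqrt (t + y) * sqrt (t + z)) * sqrt (t + z) ^ 2 \<le> (t + y + z) * (t + y + z)"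
    using t y z by (intro mult_mono) auto
  then show ?thesis
    by (simp add: power2_eq_square power3_eq_cube mult_ac)
qed

lemma sqrt_shift_weight_bounds:
  fixes t x :: real
  assumes t: "t \<ge> 0" and x: "x > 0"
  shows "x / (t + x) \<le> 2 * x / (sqrt (t + x) * (sqrt (t + x) + sqrt x))"
    and "2 * x / (sqrt (t + x) * (sqrt (t + x) + sqrt x)) \<le> 2 * x / (t + 2 * x)"
proof -
  define p r where "p = sqrt (t + x)" and "r = sqrt x"
  have pos: "p > 0" "r > 0" "p + r > 0" "p * (p + r) > 0"
    using t x by (auto simp: p_def r_def add_pos_pos)
  have "r \<le> p"
    using t by (simp add: p_def r_def)
  then have "r * p \<le> p * p"
    using pos by (intro mult_right_mono) auto
  then have "p * (p + r) \<le> 2 * (t + x)"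
    using t x by (simp add: p_def algebra_simps)
  then show "x / (t + x) \<le> 2 * x / (sqrt (t + x) * (sqrt (t + x) + sqrt x))"
    using pos t x unfolding p_def r_def by (simp add: divide_simps mult_ac)
  show "2 * x / (sqrt (t + x) * (sqrt (t + x) + sqrt x)) \<le> 2 * x / (t + 2 * x)"
    using sqrt_shift_mult_sum_ge[OF t less_imp_le[OF x]] t x by (intro divide_left_mono) auto
qed

definition RD_remainder_density :: "real \<Rightarrow> real \<Rightarrow> real \<Rightarrow> real \<Rightarrow> real" where
  "RD_remainder_density x y z t =
     2 * x * t / (sqrt (t + x) * (sqrt (t + x) + sqrt x) * sqrt (t + y) * sqrt (t + z) ^ 3)"

lemma RD_integrand_eq:
  fixes x y z t :: real
  assumes x: "x > 0" and y: "y \<ge> 0" and z: "z > 0" and t: "t > 0"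
  shows "1 / (sqrt ((t + x) * (t + y)) * (t + z) powr (3/2)) =
         1 / (sqrt (t + y) * sqrt (t + z) ^ 3) / sqrt x - RD_remainder_density x y z t / (2 * x * sqrt x)"
proof -
  define p q s r where "p = sqrt (t + x)" and "q = sqrt (t + y)" and "s = sqrt (t + z)" and "r = sqrt x"
  have pos: "p > 0" "q > 0" "s > 0" "r > 0"
    using assms by (auto simp: p_def q_def s_def r_def)
  have "s ^ 3 = ((t + z) powr (1/2)) powr (real 3)"
    using t z by (simp add: s_def powr_half_sqrt powr_realpow)
  then have powr_eq: "(t + z) powr (3/2) = s ^ 3"
    by (simp add: powr_powr)
  have diff: "(p - r) * (p + r) = t"
    using t x by (simp add: p_def r_def algebra_simps)
  have "1 / (r * q * s ^ 3) - 1 / (p * q * s ^ 3) = (p - r) / (p * r * q * s ^ 3)"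
    using pos by (simp add: field_simps)
  also have "\<dots> = (p - r) * (p + r) / ((p + r) * (p * r * q * s ^ 3))"
    using pos by simp
  also have "\<dots> = RD_remainder_density x y z t / (2 * x * r)"
    unfolding diff using x by (simp add: RD_remainder_density_def p_def q_def s_def r_def ac_simps)
  finally have "1 / (r * q * s ^ 3) - 1 / (p * q * s ^ 3) = RD_remainder_density x y z t / (2 * x * r)" .
  moreover have "sqrt ((t + x) * (t + y)) = p * q"
    using x y t by (simp add: p_def q_def real_sqrt_mult)
  ultimately show ?thesis
    using powr_eq by (simp add: q_def s_def r_def mult_ac)
qed

lemma RD_remainder_density_nonneg:
  fixes x y z t :: real
  assumes "x \<ge> 0" "y \<ge> 0" "z \<ge> 0" "t \<ge> 0"
  shows "0 \<le> RD_remainder_density x y z t"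
  using assms by (auto simp: RD_remainder_density_def intro!: divide_nonneg_nonneg)

lemma RD_remainder_density_le:
  fixes x y z t :: real
  assumes x: "x > 0" and y: "y \<ge> 0" and z: "z > 0" and t: "t > 0"
  shows "RD_remainder_density x y z t \<le> 2 * x * (1 / (sqrt (t + y) * sqrt (t + z) ^ 3))"
proof -
  define p r where "p = sqrt (t + x)" and "r = sqrt x"
  have pos: "p > 0" "r > 0" "sqrt (t + y) * sqrt (t + z) ^ 3 > 0"
    using assms by (auto simp: p_def r_def)
  have "t \<le> p * (p + r)"
    using pos x t by (simp add: p_def algebra_simps flip: power2_eq_square)
  then have "t / (p * (p + r)) \<le> 1"
    using pos by simp
  then have "2 * x * (1 / (sqrt (t + y) * sqrt (t + z) ^ 3)) * (t / (p * (p + r)))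
               \<le> 2 * x * (1 / (sqrt (t + y) * sqrt (t + z) ^ 3))"
    using pos x by (intro mult_left_le) auto
  then show ?thesis
    by (simp add: RD_remainder_density_def p_def r_def mult_ac)
qed

lemma RD_remainder_density_integrable:
  fixes x y z :: real
  assumes x: "x > 0" and y: "y \<ge> 0" and z: "z > 0"
  shows "RD_remainder_density x y z integrable_on {0<..}"
proof (rule measurable_bounded_by_integrable_imp_integrable_real)
  have "sqrt (t + x) + sqrt x \<noteq> 0" if "t > 0" for t
    using that x add_pos_pos[of "sqrt (t + x)" "sqrt x"] by simp
  then have "continuous_on {0<..} (RD_remainder_density x y z)"
    unfolding RD_remainder_density_def using assms
    by (auto intro!: continuous_intros simp: add_pos_nonneg)
  then show "RD_remainder_density x y z \<in> borel_measurable (lebesgue_on {0<..})"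
    by (rule continuous_imp_measurable_on_sets_lebesgue) simp
  show "(\<lambda>t. 2 * x * (1 / (sqrt (t + y) * sqrt (t + z) ^ 3))) integrable_on {0<..}"
    by (rule has_integral_integrable[OF has_integral_mult_right[OF has_integral_Ioi_sqrt_shift_cube[OF y z]]])
  show "\<bar>RD_remainder_density x y z t\<bar> \<le> 2 * x * (1 / (sqrt (t + y) * sqrt (t + z) ^ 3))"
    if "t \<in> {0<..}" for t
    using that x y z RD_remainder_density_nonneg[of x y z t] RD_remainder_density_le[OF x y z] by simp
qed simp

lemma carlson_RD_eq_remainder:
  fixes x y z :: real
  assumes x: "x > 0" and y: "y \<ge> 0" and z: "z > 0"
  shows "carlson_RD x y z =
           3 / sqrt x * (1 / (sqrt (y * z) + z) - integral {0<..} (RD_remainder_density x y z) / (4 * x))"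
proof -
  define R where "R = integral {0<..} (RD_remainder_density x y z)"
  define D where "D = sqrt z * (sqrt y + sqrt z)"
  have D_pos: "D > 0"
    using y z by (simp add: D_def add_nonneg_pos)
  define I where "I = 2 / D / sqrt x - R / (2 * x * sqrt x)"
  have "((\<lambda>t. 1 / (sqrt (t + y) * sqrt (t + z) ^ 3) / sqrt x - RD_remainder_density x y z t / (2 * x * sqrt x))
          has_integral I) {0<..}"
    unfolding I_def R_def D_def
    using has_integral_Ioi_sqrt_shift_cube[OF y z] RD_remainder_density_integrable[OF x y z]
    by (intro has_integral_diff has_integral_divide) auto
  then have "((\<lambda>t. 1 / (sqrt ((t + x) * (t + y)) * (t + z) powr (3/2))) has_integral I) {0<..}"
    by (rule has_integral_eq[rotated]) (simp add: RD_integrand_eq[OF x y z])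
  then have "((\<lambda>t. 1 / (sqrt ((t + x) * (t + y)) * (t + z) powr (3/2))) has_integral I) {0..}"
    by (rule has_integral_spike_set_eq[THEN iffD1, rotated 2]) (auto intro: negligible_subset[of "{0}"])
  then have "carlson_RD x y z = 3 / 2 * I"
    unfolding carlson_RD_def by (simp add: integral_unique)
  also have "\<dots> = 3 / sqrt x * (1 / D - R / (4 * x))"
    using x D_pos by (simp add: I_def field_simps)
  also have "D = sqrt (y * z) + z"
    using z by (simp add: D_def real_sqrt_mult algebra_simps)
  finally show ?thesis by (simp add: R_def)
qed

lemma RD_remainder_density_le_log_kernel:
  fixes x y z t :: real
  assumes x: "x > 0" and y: "y \<ge> 0" and z: "z > 0" and t: "t > 0" and N: "2 * (y + z) < 8 * x"
  shows "RD_remainder_density x y z t \<le>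
           8 * x / (sqrt (t + y) * sqrt (t + z) * ((sqrt (t + y) + sqrt (t + z)) ^ 2 + (8 * x - 2 * (y + z))))"
proof -
  define p q s r where "p = sqrt (t + x)" and "q = sqrt (t + y)" and "s = sqrt (t + z)" and "r = sqrt x"
  define D where "D = (q + s) ^ 2 + (8 * x - 2 * (y + z))"
  have pos: "p > 0" "q > 0" "s > 0" "r > 0" "D > 0"
    using assms by (auto simp: p_def q_def s_def r_def D_def add_nonneg_pos)
  have "q * s \<le> t + (y + z) / 2"
    unfolding q_def s_def using t y z by (intro sqrt_shift_mult_le) auto
  then have "D \<le> 4 * (t + 2 * x)"
    using t y z by (simp add: D_def q_def s_def power2_eq_square algebra_simps) argo
  also have "\<dots> \<le> 4 * (p * (p + r))"
    using sqrt_shift_mult_sum_ge[of t x] t x by (simp add: p_def r_def)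
  finally have "t * D \<le> s ^ 2 * (4 * (p * (p + r)))"
    using pos t z by (intro mult_mono) (auto simp: s_def)
  then have "t / (p * (p + r)) \<le> 4 * s ^ 2 / D"
    using pos by (simp add: divide_simps)
  then have "2 * x / (q * s ^ 3) * (t / (p * (p + r))) \<le> 2 * x / (q * s ^ 3) * (4 * s ^ 2 / D)"
    using pos x by (intro mult_left_mono) auto
  also have "\<dots> = 8 * x / (q * s * D)"
    using pos by (simp add: field_simps power2_eq_square power3_eq_cube)
  finally show ?thesis
    by (simp add: RD_remainder_density_def p_def q_def s_def r_def D_def mult_ac)
qed

lemma RD_remainder_density_ge:
  fixes x y z t :: real
  assumes x: "x > 0" and y: "y \<ge> 0" and z: "z > 0" and t: "t > 0"
  shows "x / ((t + x) * sqrt (t + y) * sqrt (t + z)) - z / (sqrt (t + y) * sqrt (t + z) ^ 3)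
           + z * (t / (t + (2 * x + y + z)) ^ 3) \<le> RD_remainder_density x y z t"
proof -
  define q s where "q = sqrt (t + y)" and "s = sqrt (t + z)"
  define M where "M = 2 * x + y + z"
  define w where "w = 2 * x / (sqrt (t + x) * (sqrt (t + x) + sqrt x))"
  have pos: "q > 0" "s > 0"
    using assms by (auto simp: q_def s_def)
  have main_term_ge: "x / ((t + x) * q * s) \<le> w / (q * s)"
    using sqrt_shift_weight_bounds(1)[of t x] t x pos
    by (simp add: w_def divide_right_mono flip: divide_divide_eq_left)
  have tail_term_le: "t / (t + M) ^ 3 \<le> (1 - w) / (q * s ^ 3)"
  proof -
    have "1 - 2 * x / (t + 2 * x) = t / (t + 2 * x)"
      using t x by (simp add: field_simps)
    then have w_le: "t / (t + 2 * x) \<le> 1 - w"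
      using sqrt_shift_weight_bounds(2)[of t x] t x by (simp add: w_def)
    have "(t + y + z) ^ 2 \<le> (t + M) ^ 2"
      using t x y z by (intro power_mono) (auto simp: M_def)
    then have "q * s ^ 3 \<le> (t + M) ^ 2"
      unfolding q_def s_def
      using sqrt_shift_mult_cube_le[OF less_imp_le[OF t] y less_imp_le[OF z]] by linarith
    moreover have "0 \<le> 1 - w"
      using w_le divide_nonneg_nonneg[of t "t + 2 * x"] t x by linarith
    ultimately have "t / (t + 2 * x) / (t + M) ^ 2 \<le> (1 - w) / (q * s ^ 3)"
      using w_le pos by (intro frac_le) auto
    moreover have "t / (t + M) ^ 3 \<le> t / (t + 2 * x) / (t + M) ^ 2"
      using t x y z by (simp add: M_def divide_simps power3_eq_cube power2_eq_square mult_right_mono)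
    ultimately show ?thesis
      by linarith
  qed
  have "RD_remainder_density x y z t = w * (s ^ 2 - z) / (q * s ^ 3)"
    using t z by (simp add: RD_remainder_density_def w_def q_def s_def mult_ac)
  also have "\<dots> = w / (q * s) - z / (q * s ^ 3) + z * ((1 - w) / (q * s ^ 3))"
    using pos by (simp add: field_simps power2_eq_square power3_eq_cube)
  finally show ?thesis
    using main_term_ge mult_left_mono[OF tail_term_le, of z] z by (simp add: q_def s_def M_def)
qed

lemma log_kernel_le:
  fixes x y z t :: real
  assumes x: "x > 0" and y: "y \<ge> 0" and z: "z \<ge> 0" and t: "t > 0"
    and N: "(y + z) / 2 + sqrt (y * z) < 2 * x"
  shows "4 * x / (sqrt (t + y) * sqrt (t + z) * ((sqrt (t + y) + sqrt (t + z)) ^ 2 + (4 * x - (y + z) - 2 * sqrt (y * z))))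
           \<le> x / ((t + x) * sqrt (t + y) * sqrt (t + z))"
proof -
  define q s where "q = sqrt (t + y)" and "s = sqrt (t + z)"
  have pos: "q > 0" "s > 0"
    using assms by (auto simp: q_def s_def)
  have "t + sqrt (y * z) \<le> q * s"
    unfolding q_def s_def using t y z by (intro sqrt_shift_mult_ge) auto
  then have "4 * (t + x) \<le> (q + s) ^ 2 + (4 * x - (y + z) - 2 * sqrt (y * z))"
    using t y z by (simp add: q_def s_def power2_eq_square algebra_simps)
  then have "4 * x / (q * s * ((q + s) ^ 2 + (4 * x - (y + z) - 2 * sqrt (y * z)))) \<le> 4 * x / (q * s * (4 * (t + x)))"
    using pos t x by (intro divide_left_mono mult_left_mono mult_pos_pos) auto
  also have "\<dots> = x / ((t + x) * q * s)"
    using pos t x by (simp add: divide_simps)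
  finally show ?thesis by (simp add: q_def s_def)
qed

lemma RD_remainder_nonneg:
  fixes x y z :: real
  assumes x: "x > 0" and y: "y \<ge> 0" and z: "z > 0"
  shows "0 \<le> integral {0<..} (RD_remainder_density x y z)"
  using RD_remainder_density_integrable[OF x y z] x y z
  by (intro integral_nonneg RD_remainder_density_nonneg) auto

lemma RD_remainder_le_log_integral:
  fixes x y z N :: real
  assumes x: "x > 0" and y: "y \<ge> 0" and z: "z > 0"
    and N_def: "N = 8 * x - 2 * (y + z)" and N: "N > 0"
  shows "integral {0<..} (RD_remainder_density x y z) \<le> 8 * x / N * ln (1 + N / (sqrt y + sqrt z) ^ 2)"
proof (rule has_integral_le[OF integrable_integral[OF RD_remainder_density_integrable[OF x y z]]])
  show "((\<lambda>t. 8 * x / N * (N / (sqrt (t + y) * sqrt (t + z) * ((sqrt (t + y) + sqrt (t + z)) ^ 2 + N))))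
          has_integral 8 * x / N * ln (1 + N / (sqrt y + sqrt z) ^ 2)) {0<..}"
    using has_integral_Ioi_log_kernel[OF y z N] by (rule has_integral_mult_right)
  fix t :: real
  assume "t \<in> {0<..}"
  then have "RD_remainder_density x y z t
      \<le> 8 * x / (sqrt (t + y) * sqrt (t + z) * ((sqrt (t + y) + sqrt (t + z)) ^ 2 + N))"
    using RD_remainder_density_le_log_kernel[OF x y z] N unfolding N_def by simp
  then show "RD_remainder_density x y z t
      \<le> 8 * x / N * (N / (sqrt (t + y) * sqrt (t + z) * ((sqrt (t + y) + sqrt (t + z)) ^ 2 + N)))"
    using N by simp
qed

lemma RD_remainder_less_log:
  fixes x y z :: real
  assumes x: "x > 0" and y: "y \<ge> 0" and z: "z > 0" and small: "(y + z) / 2 < 2 * x"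
  shows "integral {0<..} (RD_remainder_density x y z)
           < 1 / (1 - ((y + z) / 2) / (2 * x)) * ln (8 * x / ((y + z) / 2 + sqrt (y * z)))"
proof -
  define N where "N = 8 * x - 2 * (y + z)"
  define u where "u = sqrt y + sqrt z"
  have N: "N > 0"
    using small by (simp add: N_def)
  have u: "u > 0" "u ^ 2 = y + z + 2 * sqrt (y * z)"
    using y z by (auto simp: u_def add_nonneg_pos power2_eq_square algebra_simps real_sqrt_mult)
  have "u ^ 2 + N < 16 * x"
    using x arith_geo_mean_sqrt[OF y less_imp_le[OF z]] by (simp add: u N_def)
  then have "(u ^ 2 + N) / u ^ 2 < 16 * x / u ^ 2"
    using u(1) by (intro divide_strict_right_mono) auto
  moreover have "1 + N / u ^ 2 = (u ^ 2 + N) / u ^ 2"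
    using u(1) by (simp add: field_simps)
  moreover have "16 * x / u ^ 2 = 8 * x / ((y + z) / 2 + sqrt (y * z))"
    by (simp add: u(2) field_simps)
  moreover have "0 < 1 + N / u ^ 2"
    using N u(1) by (simp add: add_pos_pos)
  ultimately have "8 * x / N * ln (1 + N / u ^ 2) < 8 * x / N * ln (8 * x / ((y + z) / 2 + sqrt (y * z)))"
    using N x by (intro mult_strict_left_mono ln_less_cancel_iff[THEN iffD2]) auto
  moreover have "8 * x / N = 1 / (1 - ((y + z) / 2) / (2 * x))"
    using x N by (simp add: N_def field_simps)
  ultimately show ?thesis
    using RD_remainder_le_log_integral[OF x y z N_def N] by (simp add: u_def)
qed

lemma RD_remainder_ge_log_integral:
  fixes x y z N :: real
  assumes x: "x > 0" and y: "y \<ge> 0" and z: "z > 0"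
    and N_def: "N = 4 * x - (y + z) - 2 * sqrt (y * z)" and N: "N > 0"
  shows "4 * x / N * ln (1 + N / (sqrt y + sqrt z) ^ 2) - 2 * z / (sqrt (y * z) + z)
           + z * (1 / (2 * (2 * x + y + z))) \<le> integral {0<..} (RD_remainder_density x y z)"
proof -
  have small: "(y + z) / 2 + sqrt (y * z) < 2 * x"
    using N unfolding N_def by argo
  define M where "M = 2 * x + y + z"
  have M: "M > 0"
    using x y z by (simp add: M_def)
  have K: "sqrt z * (sqrt y + sqrt z) = sqrt (y * z) + z"
    using z by (simp add: real_sqrt_mult algebra_simps)
  define lower where "lower t =
      4 * x / N * (N / (sqrt (t + y) * sqrt (t + z) * ((sqrt (t + y) + sqrt (t + z)) ^ 2 + N)))
      - z * (1 / (sqrt (t + y) * sqrt (t + z) ^ 3)) + z * (t / (t + M) ^ 3)" for t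
  have "(lower has_integral 4 * x / N * ln (1 + N / (sqrt y + sqrt z) ^ 2)
          - z * (2 / (sqrt z * (sqrt y + sqrt z))) + z * (1 / (2 * M))) {0<..}"
    unfolding lower_def
    using has_integral_Ioi_log_kernel[OF y z N] has_integral_Ioi_sqrt_shift_cube[OF y z]
      has_integral_Ioi_div_shift_cube[OF M]
    by (intro has_integral_add has_integral_diff has_integral_mult_right)
  moreover have "lower t \<le> RD_remainder_density x y z t" if "t \<in> {0<..}" for t
  proof -
    have t: "t > 0" using that by simp
    have "4 * x / N * (N / (sqrt (t + y) * sqrt (t + z) * ((sqrt (t + y) + sqrt (t + z)) ^ 2 + N)))
        = 4 * x / (sqrt (t + y) * sqrt (t + z) * ((sqrt (t + y) + sqrt (t + z)) ^ 2 + N))"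
      using N by simp
    also have "\<dots> \<le> x / ((t + x) * sqrt (t + y) * sqrt (t + z))"
      unfolding N_def by (rule log_kernel_le[OF x y less_imp_le[OF z] t small])
    finally show ?thesis
      using RD_remainder_density_ge[OF x y z t] by (simp add: lower_def M_def add.assoc)
  qed
  ultimately have "4 * x / N * ln (1 + N / (sqrt y + sqrt z) ^ 2) - z * (2 / (sqrt z * (sqrt y + sqrt z)))
      + z * (1 / (2 * M)) \<le> integral {0<..} (RD_remainder_density x y z)"
    using RD_remainder_density_integrable[OF x y z] by (intro has_integral_le[OF _ integrable_integral])
  moreover have "z * (2 / (sqrt z * (sqrt y + sqrt z))) = 2 * z / (sqrt (y * z) + z)"
    by (simp add: K)
  ultimately show ?thesis
    unfolding M_def by linarith
qed

lemma RD_remainder_greater_log: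
  fixes x y z :: real
  assumes x: "x > 0" and y: "y \<ge> 0" and z: "z > 0" and small: "(y + z) / 2 + sqrt (y * z) < 2 * x"
  shows "1 / (1 - sqrt (y * z) / x) * ln (2 * x / ((y + z) / 2 + sqrt (y * z))) - 2 * z / (sqrt (y * z) + z)
           < integral {0<..} (RD_remainder_density x y z)"
proof -
  define g where "g = sqrt (y * z)"
  define N where "N = 4 * x - (y + z) - 2 * g"
  define u where "u = sqrt y + sqrt z"
  have g: "0 \<le> g" "g \<le> (y + z) / 2"
    using y z arith_geo_mean_sqrt[of y z] by (auto simp: g_def)
  have N: "N > 0"
    using small unfolding N_def g_def by argo
  have u: "u > 0" "u ^ 2 = y + z + 2 * g"
    using y z by (auto simp: u_def g_def add_nonneg_pos power2_eq_square algebra_simps real_sqrt_mult)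
  have log_arg: "1 + N / u ^ 2 = 2 * x / ((y + z) / 2 + g)"
  proof -
    have "u ^ 2 + N = 4 * x"
      by (simp add: u(2) N_def)
    then have "1 + N / u ^ 2 = 4 * x / u ^ 2"
      using u(1) by (simp add: field_simps)
    then show ?thesis
      by (simp add: u(2) field_simps)
  qed
  have "1 / (1 - g / x) * ln (2 * x / ((y + z) / 2 + g)) \<le> 4 * x / N * ln (2 * x / ((y + z) / 2 + g))"
  proof (rule mult_right_mono)
    have "g < x"
      using g small unfolding g_def by argo
    then have "1 / (1 - g / x) = x / (x - g)"
      using x by (simp add: field_simps)
    also have "\<dots> \<le> 4 * x / N"
      using g N x \<open>g < x\<close> by (simp add: N_def divide_simps)
    finally show "1 / (1 - g / x) \<le> 4 * x / N" .
    have "0 < (y + z) / 2 + g"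
      using y z g(1) by argo
    then show "0 \<le> ln (2 * x / ((y + z) / 2 + g))"
      using small by (simp add: g_def)
  qed
  moreover have "0 < z * (1 / (2 * (2 * x + y + z)))"
    using x y z by simp
  ultimately show ?thesis
    using RD_remainder_ge_log_integral[OF x y z N_def[unfolded g_def] N]
    unfolding log_arg[unfolded u_def] g_def by linarith
qed

theorem mainTheorem8:
  fixes x y z :: real
  assumes hx: "x > 0" and hy: "y \<ge> 0" and hz: "z > 0"
    and hg: "sqrt (y * z) < x" and ha: "(y + z) / 2 < 2 * x"
  shows "\<exists>r. carlson_RD x y z = 3 / sqrt x * (1 / (sqrt (y * z) + z) - r / (4 * x))
           \<and> 1 / (1 - sqrt (y * z) / x) * ln (2 * x / ((y + z) / 2 + sqrt (y * z)))
               - 2 * z / (sqrt (y * z) + z) < r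
           \<and> r < 1 / (1 - ((y + z) / 2) / (2 * x)) * ln (8 * x / ((y + z) / 2 + sqrt (y * z)))"
proof (intro exI conjI)
  let ?r = "integral {0<..} (RD_remainder_density x y z)"
  show "carlson_RD x y z = 3 / sqrt x * (1 / (sqrt (y * z) + z) - ?r / (4 * x))"
    by (rule carlson_RD_eq_remainder[OF hx hy hz])
  show "?r < 1 / (1 - ((y + z) / 2) / (2 * x)) * ln (8 * x / ((y + z) / 2 + sqrt (y * z)))"
    by (rule RD_remainder_less_log[OF hx hy hz ha])
  show "1 / (1 - sqrt (y * z) / x) * ln (2 * x / ((y + z) / 2 + sqrt (y * z))) - 2 * z / (sqrt (y * z) + z) < ?r"
  proof (cases "(y + z) / 2 + sqrt (y * z) < 2 * x")
    case True
    then show ?thesis by (rule RD_remainder_greater_log[OF hx hy hz])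
  next
    case False
    have "0 < (y + z) / 2 + sqrt (y * z)"
      using hy hz by (simp add: add_pos_nonneg)
    then have ln_nonpos: "ln (2 * x / ((y + z) / 2 + sqrt (y * z))) \<le> 0"
      using False hx by simp
    have "0 < 1 / (1 - sqrt (y * z) / x)"
      using hx hg by simp
    then have "1 / (1 - sqrt (y * z) / x) * ln (2 * x / ((y + z) / 2 + sqrt (y * z))) \<le> 0"
      using ln_nonpos by (intro mult_nonneg_nonpos) auto
    moreover have "0 < 2 * z / (sqrt (y * z) + z)"
      using hy hz by (simp add: add_nonneg_pos)
    ultimately show ?thesis
      using RD_remainder_nonneg[OF hx hy hz] by linarith
  qed
qed

end
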